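(* Either $g(n)\le 3$ for all $n$ or $g(n)\to\infty$; either $h(n)\le 3$ for all $n$ or $h(n)\to\infty$; and either $f(n)\le 9$ for all $n$ or $f(n)\to\infty$.
   Context: For a digraph $D$, $\chi(D)$ is the chromatic number of its underlying graph; $D^{-1}$ is $D$ with arcs reversed; $D_1\times D_2$ has vertex set $V(D_1)\times V(D_2)$ and arc $(x,y)\to(x',y')$ iff $(x,x')$ is an arc of $D_1$ and $(y,y')$ an arc of $D_2$ (graph product $G\times H$ analogously with edges: $(x,y)\sim(x',y')$ iff $xx'\in E(G)$, $yy'\in E(H)$). $f(n)=\min\{\chi(G\times H):\chi(G),\chi(H)\ge n\}$ over graphs; $g(n)=\min\{\chi(D_1\times D_2):\chi(D_1),\chi(D_2)\ge n\}$ and $h(n)=\min\{\max\{\chi(D_1\times D_2),\chi(D_1\times D_2^{-1})\}:\chi(D_1),\chi(D_2)\ge n\}$ over digraphs (digons allowed). These functions are non-decreasing in $n$. *)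

theory Defs
  imports Main
begin

text \<open>A (finite, loopless) digraph is a pair (V, A) of a finite vertex set and an arc set
  A \<subseteq> V \<times> V with no loops; digons (both (u,v) and (v,u)) are allowed.\<close>

definition is_digraph :: "'a set \<times> ('a \<times> 'a) set \<Rightarrow> bool" where
  "is_digraph D \<longleftrightarrow> finite (fst D) \<and> snd D \<subseteq> fst D \<times> fst D \<and> irrefl (snd D)"

definition is_graph :: "'a set \<times> ('a \<times> 'a) set \<Rightarrow> bool" where
  "is_graph G \<longleftrightarrow> is_digraph G \<and> sym (snd G)"

definition proper_colouring :: "'a set \<times> ('a \<times> 'a) set \<Rightarrow> nat \<Rightarrow> ('a \<Rightarrow> nat) \<Rightarrow> bool" where
  "proper_colouring D k c \<longleftrightarrow>
     (\<forall>v\<in>fst D. c v < k) \<and> (\<forall>(u,v)\<in>snd D. c u \<noteq> c v)"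

text \<open>Chromatic number of the underlying graph.\<close>
definition chi :: "'a set \<times> ('a \<times> 'a) set \<Rightarrow> nat" where
  "chi D = (LEAST k. \<exists>c. proper_colouring D k c)"

definition dprod :: "'a set \<times> ('a \<times> 'a) set \<Rightarrow> 'b set \<times> ('b \<times> 'b) set
    \<Rightarrow> ('a \<times> 'b) set \<times> (('a \<times> 'b) \<times> ('a \<times> 'b)) set" where
  "dprod D1 D2 = (fst D1 \<times> fst D2,
     {((x,y),(x',y')). (x,x') \<in> snd D1 \<and> (y,y') \<in> snd D2})"

definition drev :: "'a set \<times> ('a \<times> 'a) set \<Rightarrow> 'a set \<times> ('a \<times> 'a) set" where
  "drev D = (fst D, (snd D)\<inverse>)"

text \<open>The minima are taken over all finite graphs/digraphs (up to isomorphism every finite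
  graph lives on a finite subset of nat).\<close>
definition f_fun :: "nat \<Rightarrow> nat" where
  "f_fun n = (LEAST k. \<exists>(G::nat set \<times> (nat \<times> nat) set) (H::nat set \<times> (nat \<times> nat) set).
      is_graph G \<and> is_graph H \<and> chi G \<ge> n \<and> chi H \<ge> n \<and> chi (dprod G H) = k)"

definition g_fun :: "nat \<Rightarrow> nat" where
  "g_fun n = (LEAST k. \<exists>(D1::nat set \<times> (nat \<times> nat) set) (D2::nat set \<times> (nat \<times> nat) set).
      is_digraph D1 \<and> is_digraph D2 \<and> chi D1 \<ge> n \<and> chi D2 \<ge> n \<and> chi (dprod D1 D2) = k)"

definition h_fun :: "nat \<Rightarrow> nat" where
  "h_fun n = (LEAST k. \<exists>(D1::nat set \<times> (nat \<times> nat) set) (D2::nat set \<times> (nat \<times> nat) set).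
      is_digraph D1 \<and> is_digraph D2 \<and> chi D1 \<ge> n \<and> chi D2 \<ge> n \<and>
      max (chi (dprod D1 D2)) (chi (dprod D1 (drev D2))) = k)"

end

theory Submission
  imports Defs "HOL-Library.Nat_Bijection"
begin

text \<open>The argument works with the line digraph \<open>\<delta>D\<close>, whose vertices are the arcs of \<open>D\<close> and
  whose arcs join \<open>(u,v)\<close> to \<open>(v,w)\<close>. Its chromatic number is roughly the logarithm of that of
  \<open>D\<close>: \<open>\<chi>(D) \<le> 2^\<chi>(\<delta>D)\<close>, and conversely \<open>\<chi>(\<delta>D)\<close> is small whenever \<open>\<chi>(D)\<close> is, so that a
  bounded number \<open>r\<close> of iterations brings every digraph with \<open>\<chi>(D) \<le> K\<close> down to
  \<open>\<chi>(\<delta>\<^sup>rD) \<le> 3\<close>, while \<open>\<chi>(\<delta>\<^sup>rD)\<close> stays large when \<open>\<chi>(D)\<close> is large. Since \<open>\<delta>\<^sup>rD\<^sub>1 \<times> \<delta>\<^sup>rD\<^sub>2\<close>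
  maps homomorphically into \<open>\<delta>\<^sup>r(D\<^sub>1 \<times> D\<^sub>2)\<close>, a bound \<open>g(N) \<le> K\<close> for large \<open>N\<close> yields
  \<open>g(n) \<le> 3\<close>; the same works for \<open>h\<close>, reversing arcs of the second factor. Finally \<open>h \<le> f\<close>,
  and if \<open>h \<le> 3\<close> then symmetrising the two factors and combining the two 3-colourings gives
  \<open>f \<le> 9\<close>.\<close>

type_synonym 'a digraph = "'a set \<times> ('a \<times> 'a) set"

section \<open>Colourings and homomorphisms\<close>

lemma chi_le: "proper_colouring D k c \<Longrightarrow> chi D \<le> k"
  unfolding chi_def by (rule Least_le) blast

lemma proper_colouring_by_finite_labels:
  assumes "is_digraph D"
    and "finite S" "\<forall>v\<in>fst D. c v \<in> S" "\<forall>(u,v)\<in>snd D. c u \<noteq> c v"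
  obtains c' where "proper_colouring D (card S) c'"
proof -
  obtain e :: "_ \<Rightarrow> nat" and n where e: "e ` S = {i. i < n}" "inj_on e S"
    using finite_imp_inj_to_nat_seg[OF assms(2)] by blast
  have "n = card S"
    using e card_image[OF e(2)] by simp
  moreover have "proper_colouring D n (e \<circ> c)"
    unfolding proper_colouring_def
  proof (intro conjI ballI)
    show "(e \<circ> c) v < n" if "v \<in> fst D" for v
      using assms(3) e(1) that by auto
    show "case a of (u, v) \<Rightarrow> (e \<circ> c) u \<noteq> (e \<circ> c) v" if "a \<in> snd D" for a
    proof (cases a)
      case (Pair u v)
      then have "c u \<in> S" "c v \<in> S" "c u \<noteq> c v"
        using assms that unfolding is_digraph_def by auto
      then show ?thesis
        using Pair e(2) by (auto dest: inj_onD)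
    qed
  qed
  ultimately show ?thesis
    using that by blast
qed

lemma chi_le_card:
  assumes "is_digraph D"
    and "finite S" "\<forall>v\<in>fst D. c v \<in> S" "\<forall>(u,v)\<in>snd D. c u \<noteq> c v"
  shows "chi D \<le> card S"
proof -
  obtain c' where "proper_colouring D (card S) c'"
    using proper_colouring_by_finite_labels[OF assms] .
  then show ?thesis
    by (rule chi_le)
qed

lemma proper_colouring_chi:
  assumes "is_digraph D"
  obtains c where "proper_colouring D (chi D) c"
proof -
  have "finite (fst D)" "\<forall>v\<in>fst D. id v \<in> fst D" "\<forall>(u,v)\<in>snd D. id u \<noteq> id v"
    using assms by (auto simp: is_digraph_def irrefl_def)
  then obtain c where "proper_colouring D (card (fst D)) c"
    by (rule proper_colouring_by_finite_labels[OF assms])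
  then have "\<exists>k c. proper_colouring D k c"
    by blast
  then have "\<exists>c. proper_colouring D (LEAST k. \<exists>c. proper_colouring D k c) c"
    by (rule LeastI_ex)
  then show ?thesis
    using that unfolding chi_def by blast
qed

lemma proper_colouring_if_chi_le:
  assumes "is_digraph D" "chi D \<le> K"
  obtains c where "proper_colouring D K c"
proof -
  obtain c where "proper_colouring D (chi D) c"
    using proper_colouring_chi[OF assms(1)] .
  then have "proper_colouring D K c"
    using assms(2) unfolding proper_colouring_def by fastforce
  then show ?thesis
    by (rule that)
qed

definition hom :: "('a \<Rightarrow> 'b) \<Rightarrow> 'a digraph \<Rightarrow> 'b digraph \<Rightarrow> bool" where
  "hom \<phi> D E \<longleftrightarrow> (\<forall>v\<in>fst D. \<phi> v \<in> fst E) \<and> (\<forall>(u,v)\<in>snd D. (\<phi> u, \<phi> v) \<in> snd E)"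

definition homomorphic :: "'a digraph \<Rightarrow> 'b digraph \<Rightarrow> bool" where
  "homomorphic D E \<longleftrightarrow> (\<exists>\<phi>. hom \<phi> D E)"

lemma homomorphic_refl: "homomorphic D D"
  unfolding homomorphic_def hom_def by (rule exI[of _ id]) auto

lemma hom_comp: "hom \<phi> D E \<Longrightarrow> hom \<psi> E F \<Longrightarrow> hom (\<psi> \<circ> \<phi>) D F"
  unfolding hom_def by fastforce

lemma homomorphic_trans [trans]: "homomorphic D E \<Longrightarrow> homomorphic E F \<Longrightarrow> homomorphic D F"
  unfolding homomorphic_def using hom_comp by blast

lemma chi_le_if_homomorphic:
  assumes "homomorphic D E" "is_digraph E"
  shows "chi D \<le> chi E"
proof -
  obtain \<phi> where \<phi>: "hom \<phi> D E"
    using assms(1) homomorphic_def by blast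
  obtain c where "proper_colouring E (chi E) c"
    using proper_colouring_chi[OF assms(2)] .
  then have "proper_colouring D (chi E) (c \<circ> \<phi>)"
    using \<phi> unfolding hom_def proper_colouring_def by fastforce
  then show ?thesis
    by (rule chi_le)
qed

lemma is_digraph_dprod: "is_digraph X \<Longrightarrow> is_digraph Y \<Longrightarrow> is_digraph (dprod X Y)"
  unfolding is_digraph_def dprod_def irrefl_def by auto

lemma is_digraph_drev: "is_digraph D \<Longrightarrow> is_digraph (drev D)"
  unfolding is_digraph_def drev_def irrefl_def by auto

lemma homomorphic_dprod:
  assumes "homomorphic X X'" "homomorphic Y Y'"
  shows "homomorphic (dprod X Y) (dprod X' Y')"
proof -
  obtain \<phi> \<psi> where "hom \<phi> X X'" "hom \<psi> Y Y'"
    using assms unfolding homomorphic_def by blast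
  then have "hom (map_prod \<phi> \<psi>) (dprod X Y) (dprod X' Y')"
    unfolding hom_def dprod_def by auto
  then show ?thesis
    unfolding homomorphic_def by blast
qed

lemma homomorphic_drev: "homomorphic D E \<Longrightarrow> homomorphic (drev D) (drev E)"
  unfolding homomorphic_def hom_def drev_def by auto

definition dmap :: "('a \<Rightarrow> 'b) \<Rightarrow> 'a digraph \<Rightarrow> 'b digraph" where
  "dmap f D = (f ` fst D, map_prod f f ` snd D)"

lemma is_digraph_dmap: "inj f \<Longrightarrow> is_digraph D \<Longrightarrow> is_digraph (dmap f D)"
  unfolding is_digraph_def dmap_def irrefl_def inj_def by auto

lemma homomorphic_dmap: "homomorphic D (dmap f D)"
  unfolding homomorphic_def hom_def dmap_def by (rule exI[of _ f]) auto

lemma homomorphic_dmap_inverse: "inj f \<Longrightarrow> homomorphic (dmap f D) D"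
  unfolding homomorphic_def hom_def dmap_def by (rule exI[of _ "inv f"]) auto

lemma chi_dmap: "inj f \<Longrightarrow> is_digraph D \<Longrightarrow> chi (dmap f D) = chi D"
  by (meson antisym chi_le_if_homomorphic homomorphic_dmap homomorphic_dmap_inverse
      is_digraph_dmap)

section \<open>The line digraph\<close>

definition line_digraph :: "'a digraph \<Rightarrow> ('a \<times> 'a) digraph" where
  "line_digraph D = (snd D, {((u,v),(v,w)) | u v w. (u,v) \<in> snd D \<and> (v,w) \<in> snd D})"

lemma is_digraph_line_digraph:
  assumes "is_digraph D"
  shows "is_digraph (line_digraph D)"
proof -
  have "finite (snd D)"
    using assms unfolding is_digraph_def by (meson finite_SigmaI finite_subset)
  moreover have "(u,v) \<noteq> (v,w)" if "(u,v) \<in> snd D" for u v w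
    using assms that unfolding is_digraph_def irrefl_def by auto
  ultimately show ?thesis
    unfolding is_digraph_def line_digraph_def irrefl_def by auto
qed

lemma homomorphic_line_digraph:
  assumes "homomorphic D E"
  shows "homomorphic (line_digraph D) (line_digraph E)"
proof -
  obtain \<phi> where "hom \<phi> D E"
    using assms unfolding homomorphic_def by blast
  then have "hom (map_prod \<phi> \<phi>) (line_digraph D) (line_digraph E)"
    unfolding hom_def line_digraph_def by auto
  then show ?thesis
    unfolding homomorphic_def by blast
qed

lemma homomorphic_dprod_line_digraph:
  "homomorphic (dprod (line_digraph X) (line_digraph Y)) (line_digraph (dprod X Y))"
proof -
  have "hom (\<lambda>((x,x'),(y,y')). ((x,y),(x',y')))
      (dprod (line_digraph X) (line_digraph Y)) (line_digraph (dprod X Y))"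
    unfolding hom_def line_digraph_def dprod_def by auto
  then show ?thesis
    unfolding homomorphic_def by blast
qed

lemma homomorphic_drev_line_digraph:
  "homomorphic (drev (line_digraph D)) (line_digraph (drev D))"
proof -
  have "hom prod.swap (drev (line_digraph D)) (line_digraph (drev D))"
    unfolding hom_def line_digraph_def drev_def by auto
  then show ?thesis
    unfolding homomorphic_def by blast
qed

text \<open>Colour each vertex by the set of colours on its incoming arcs.\<close>

lemma chi_le_exp_chi_line_digraph:
  assumes "is_digraph D"
  shows "chi D \<le> 2 ^ chi (line_digraph D)"
proof -
  define k where "k = chi (line_digraph D)"
  obtain c where c: "proper_colouring (line_digraph D) k c"
    using proper_colouring_chi[OF is_digraph_line_digraph[OF assms]] k_def by blast
  define S where "S v = {c (u,v) | u. (u,v) \<in> snd D}" for v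
  have "S v \<in> Pow {..<k}" for v
    using c unfolding S_def proper_colouring_def line_digraph_def by auto
  moreover have "S v \<noteq> S w" if vw: "(v,w) \<in> snd D" for v w
  proof -
    have "c (u,v) \<noteq> c (v,w)" if "(u,v) \<in> snd D" for u
    proof -
      have "((u,v),(v,w)) \<in> snd (line_digraph D)"
        using vw that unfolding line_digraph_def by auto
      then show ?thesis
        using c unfolding proper_colouring_def by fastforce
    qed
    then have "c (v,w) \<notin> S v"
      unfolding S_def by fastforce
    moreover have "c (v,w) \<in> S w"
      using vw unfolding S_def by auto
    ultimately show ?thesis
      by blast
  qed
  ultimately have "chi D \<le> card (Pow {..<k})"
    by (intro chi_le_card[OF assms, where c = S]) auto
  then show ?thesis
    by (simp add: card_Pow k_def)
qed

text \<open>With a \<open>K\<close>-colouring \<open>c\<close> of \<open>D\<close>, the arc \<open>(u,v)\<close> is coloured by an element of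
  \<open>F (c v) - F (c u)\<close>.\<close>

lemma chi_line_digraph_le_Sperner:
  assumes "is_digraph D" "chi D \<le> K"
    and F: "\<forall>i<K. F i \<subseteq> {..<k}" "\<forall>i<K. \<forall>j<K. i \<noteq> j \<longrightarrow> \<not> F j \<subseteq> F i"
  shows "chi (line_digraph D) \<le> k"
proof -
  obtain c where c: "proper_colouring D K c"
    using proper_colouring_if_chi_le[OF assms(1,2)] .
  define label where "label = (\<lambda>(u,v). SOME x. x \<in> F (c v) - F (c u))"
  have label: "label (u,v) \<in> F (c v) - F (c u)" "c v < K" if "(u,v) \<in> snd D" for u v
  proof -
    have "c u < K" "c v < K" "c u \<noteq> c v"
      using assms(1) c that unfolding is_digraph_def proper_colouring_def by auto
    then have "\<exists>x. x \<in> F (c v) - F (c u)"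
      using F(2) by blast
    then have "(SOME x. x \<in> F (c v) - F (c u)) \<in> F (c v) - F (c u)"
      by (rule someI_ex)
    then show "label (u,v) \<in> F (c v) - F (c u)"
      unfolding label_def by simp
    show "c v < K"
      by fact
  qed
  have "chi (line_digraph D) \<le> card {..<k}"
  proof (rule chi_le_card[OF is_digraph_line_digraph[OF assms(1)]])
    show "\<forall>e\<in>fst (line_digraph D). label e \<in> {..<k}"
      using label F(1) unfolding line_digraph_def by fastforce
    have "label (u,v) \<noteq> label (v,w)" if "(u,v) \<in> snd D" "(v,w) \<in> snd D" for u v w
      using label(1)[OF that(1)] label(1)[OF that(2)] by auto
    then show "\<forall>(e, e')\<in>snd (line_digraph D). label e \<noteq> label e'"
      unfolding line_digraph_def by auto
  qed simp
  then show ?thesis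
    by simp
qed

lemma chi_line_digraph_le_4:
  assumes "is_digraph D" "chi D \<le> 6"
  shows "chi (line_digraph D) \<le> 4"
proof -
  define F :: "nat \<Rightarrow> nat set" where "F i = [{0,1}, {0,2}, {0,3}, {1,2}, {1,3}, {2,3}] ! i" for i
  have "\<forall>i<6. F i \<subseteq> {..<4}" "\<forall>i<6. \<forall>j<6. i \<noteq> j \<longrightarrow> \<not> F j \<subseteq> F i"
    by (simp_all add: F_def less_Suc_eq numeral_eq_Suc)
  then show ?thesis
    by (rule chi_line_digraph_le_Sperner[OF assms])
qed

lemma chi_line_digraph_le_double:
  assumes "is_digraph D" "chi D \<le> j * j"
  shows "chi (line_digraph D) \<le> 2 * j"
proof -
  define F where "F i = {i div j, j + i mod j}" for i
  have div_less: "i div j < j" "i mod j < j" if "i < j * j" for i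
  proof -
    have "0 < j"
      using that by (cases "j = 0") auto
    then show "i div j < j" "i mod j < j"
      using that by (simp_all add: less_mult_imp_div_less)
  qed
  have "\<forall>i<j * j. F i \<subseteq> {..<2 * j}"
    using div_less by (fastforce simp: F_def)
  moreover have "\<forall>i<j * j. \<forall>i'<j * j. i \<noteq> i' \<longrightarrow> \<not> F i' \<subseteq> F i"
  proof (intro allI impI)
    fix i i' assume i: "i < j * j" "i' < j * j" "i \<noteq> i'"
    then have "i div j \<noteq> i' div j \<or> i mod j \<noteq> i' mod j"
      by (metis div_mod_decomp)
    then show "\<not> F i' \<subseteq> F i"
      using div_less[OF i(1)] div_less[OF i(2)] unfolding F_def by auto
  qed
  ultimately show ?thesis
    by (rule chi_line_digraph_le_Sperner[OF assms])
qed

text \<open>A 3-colouring of the walks \<open>a \<rightarrow> b \<rightarrow> c\<close> in the complete digraph on 4 vertices such that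
  consecutive walks \<open>a \<rightarrow> b \<rightarrow> c\<close> and \<open>b \<rightarrow> c \<rightarrow> d\<close> get different colours; the entries with
  \<open>a = b\<close> or \<open>b = c\<close> are irrelevant.\<close>

definition walk_colour :: "nat \<Rightarrow> nat \<Rightarrow> nat \<Rightarrow> nat" where
  "walk_colour a b c =
    [[[0, 0, 0, 0], [1, 0, 1, 1], [2, 2, 0, 2], [0, 0, 0, 0]],
     [[0, 2, 0, 2], [0, 0, 0, 0], [2, 2, 0, 2], [0, 2, 0, 0]],
     [[0, 0, 0, 1], [1, 0, 1, 1], [0, 0, 0, 0], [0, 0, 1, 0]],
     [[0, 2, 1, 1], [1, 0, 1, 1], [2, 2, 0, 2], [0, 0, 0, 0]]] ! a ! b ! c"

lemma walk_colour_less_3: "\<forall>a<4. \<forall>b<4. \<forall>c<4. walk_colour a b c < 3"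
  by (simp add: walk_colour_def less_Suc_eq numeral_eq_Suc)

lemma walk_colour_proper:
  "\<forall>a<4. \<forall>b<4. \<forall>c<4. \<forall>d<4. a \<noteq> b \<longrightarrow> b \<noteq> c \<longrightarrow> c \<noteq> d \<longrightarrow>
     walk_colour a b c \<noteq> walk_colour b c d"
  by (simp add: walk_colour_def less_Suc_eq numeral_eq_Suc)

lemma chi_line_line_digraph_le_3:
  assumes "is_digraph D" "chi D \<le> 4"
  shows "chi (line_digraph (line_digraph D)) \<le> 3"
proof -
  obtain c where c: "proper_colouring D 4 c"
    using proper_colouring_if_chi_le[OF assms] .
  have arc: "c u < 4" "c v < 4" "c u \<noteq> c v" if "(u,v) \<in> snd D" for u v
    using assms(1) c that unfolding is_digraph_def proper_colouring_def by auto
  define label :: "('a \<times> 'a) \<times> ('a \<times> 'a) \<Rightarrow> nat"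
    where "label = (\<lambda>((u,v),(_,w)). walk_colour (c u) (c v) (c w))"
  have "chi (line_digraph (line_digraph D)) \<le> card {..<3::nat}"
  proof (rule chi_le_card[OF is_digraph_line_digraph[OF is_digraph_line_digraph[OF assms(1)]],
        where c = label])
    have "label ((u,v),(v,w)) < 3" if "(u,v) \<in> snd D" "(v,w) \<in> snd D" for u v w
      using walk_colour_less_3 arc[OF that(1)] arc[OF that(2)] unfolding label_def by simp
    then show "\<forall>e\<in>fst (line_digraph (line_digraph D)). label e \<in> {..<3}"
      unfolding line_digraph_def by auto
    have "label ((u,v),(v,w)) \<noteq> label ((v,w),(w,x))"
      if "(u,v) \<in> snd D" "(v,w) \<in> snd D" "(w,x) \<in> snd D" for u v w x
      using walk_colour_proper arc[OF that(1)] arc[OF that(2)] arc[OF that(3)]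
      unfolding label_def by simp
    then show "\<forall>(e, e')\<in>snd (line_digraph (line_digraph D)). label e \<noteq> label e'"
      unfolding line_digraph_def by auto
  qed simp
  then show ?thesis
    by simp
qed

lemma chi_line_digraph_decreases:
  assumes "4 < K"
  shows "\<exists>K'<K. \<forall>D. is_digraph D \<longrightarrow> chi D \<le> K \<longrightarrow> chi (line_digraph D) \<le> K'"
proof (cases "K \<le> 6")
  case True
  have "chi (line_digraph D) \<le> 4" if "is_digraph D" "chi D \<le> K" for D
    using that True by (intro chi_line_digraph_le_4) auto
  then show ?thesis
    using assms by (intro exI[of _ 4]) auto
next
  case False
  define j where "j = (K - 1) div 2"
  have "K \<le> j * j"
  proof -
    have "K \<le> 3 * j" "3 \<le> j"
      using False unfolding j_def by auto
    then show ?thesis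
      by (meson le_trans mult_le_mono1)
  qed
  moreover have "2 * j < K"
    using False unfolding j_def by auto
  moreover have "chi (line_digraph D) \<le> 2 * j" if "is_digraph D" "chi D \<le> K" for D
    using that \<open>K \<le> j * j\<close> by (intro chi_line_digraph_le_double) auto
  ultimately show ?thesis
    by (intro exI[of _ "2 * j"]) auto
qed

text \<open>Iteration needs the line digraph to stay in one vertex type, so its arcs are encoded.\<close>

definition line_digraph_nat :: "nat digraph \<Rightarrow> nat digraph" where
  "line_digraph_nat D = dmap prod_encode (line_digraph D)"

lemma is_digraph_line_digraph_nat: "is_digraph D \<Longrightarrow> is_digraph (line_digraph_nat D)"
  by (simp add: line_digraph_nat_def is_digraph_dmap is_digraph_line_digraph inj_prod_encode)

lemma is_digraph_line_digraph_nat_iter: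
  "is_digraph D \<Longrightarrow> is_digraph ((line_digraph_nat ^^ r) D)"
  by (induction r) (simp_all add: is_digraph_line_digraph_nat)

lemma chi_line_digraph_nat: "is_digraph D \<Longrightarrow> chi (line_digraph_nat D) = chi (line_digraph D)"
  by (simp add: line_digraph_nat_def chi_dmap is_digraph_line_digraph inj_prod_encode)

lemma homomorphic_line_digraph_nat: "homomorphic (line_digraph D) (line_digraph_nat D)"
  unfolding line_digraph_nat_def by (rule homomorphic_dmap)

lemma homomorphic_line_digraph_nat_inverse: "homomorphic (line_digraph_nat D) (line_digraph D)"
  unfolding line_digraph_nat_def by (simp add: homomorphic_dmap_inverse inj_prod_encode)

lemma homomorphic_dprod_line_digraph_nat_iter:
  "homomorphic (dprod ((line_digraph_nat ^^ r) X) ((line_digraph_nat ^^ r) Y))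
     ((line_digraph_nat ^^ r) (dmap prod_encode (dprod X Y)))"
proof (induction r)
  case 0
  then show ?case
    by (simp add: homomorphic_dmap)
next
  case (Suc r)
  let ?A = "(line_digraph_nat ^^ r) X" and ?B = "(line_digraph_nat ^^ r) Y"
    and ?C = "(line_digraph_nat ^^ r) (dmap prod_encode (dprod X Y))"
  have "homomorphic (dprod (line_digraph_nat ?A) (line_digraph_nat ?B))
      (dprod (line_digraph ?A) (line_digraph ?B))"
    by (intro homomorphic_dprod homomorphic_line_digraph_nat_inverse)
  also have "homomorphic \<dots> (line_digraph (dprod ?A ?B))"
    by (rule homomorphic_dprod_line_digraph)
  also have "homomorphic \<dots> (line_digraph ?C)"
    using Suc.IH by (rule homomorphic_line_digraph)
  also have "homomorphic \<dots> (line_digraph_nat ?C)"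
    by (rule homomorphic_line_digraph_nat)
  finally show ?case
    by simp
qed

lemma homomorphic_drev_line_digraph_nat_iter:
  "homomorphic (drev ((line_digraph_nat ^^ r) X)) ((line_digraph_nat ^^ r) (drev X))"
proof (induction r)
  case 0
  then show ?case
    by (simp add: homomorphic_refl)
next
  case (Suc r)
  let ?A = "(line_digraph_nat ^^ r) X" and ?C = "(line_digraph_nat ^^ r) (drev X)"
  have "homomorphic (drev (line_digraph_nat ?A)) (drev (line_digraph ?A))"
    by (intro homomorphic_drev homomorphic_line_digraph_nat_inverse)
  also have "homomorphic \<dots> (line_digraph (drev ?A))"
    by (rule homomorphic_drev_line_digraph)
  also have "homomorphic \<dots> (line_digraph ?C)"
    using Suc.IH by (rule homomorphic_line_digraph)
  also have "homomorphic \<dots> (line_digraph_nat ?C)"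
    by (rule homomorphic_line_digraph_nat)
  finally show ?case
    by simp
qed

lemma line_digraph_nat_iter_3_colourable:
  "\<exists>r. \<forall>D. is_digraph D \<longrightarrow> chi D \<le> K \<longrightarrow> chi ((line_digraph_nat ^^ r) D) \<le> 3"
proof (induction K rule: less_induct)
  case (less K)
  show ?case
  proof (cases "K \<le> 4")
    case True
    have "chi ((line_digraph_nat ^^ 2) D) \<le> 3" if D: "is_digraph D" "chi D \<le> K" for D
    proof -
      have "chi (line_digraph_nat (line_digraph_nat D)) = chi (line_digraph (line_digraph_nat D))"
        using D by (simp add: chi_line_digraph_nat is_digraph_line_digraph_nat)
      also have "\<dots> \<le> chi (line_digraph (line_digraph D))"
        using D by (intro chi_le_if_homomorphic homomorphic_line_digraph
            homomorphic_line_digraph_nat_inverse is_digraph_line_digraph)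
      also have "\<dots> \<le> 3"
        using D True by (intro chi_line_line_digraph_le_3) auto
      finally show ?thesis
        by (simp add: numeral_2_eq_2)
    qed
    then show ?thesis
      by blast
  next
    case False
    then obtain K' where "K' < K"
      and K': "\<forall>D :: nat digraph. is_digraph D \<longrightarrow> chi D \<le> K \<longrightarrow> chi (line_digraph D) \<le> K'"
      using chi_line_digraph_decreases by (meson not_le)
    then obtain r where r: "\<forall>D. is_digraph D \<longrightarrow> chi D \<le> K' \<longrightarrow> chi ((line_digraph_nat ^^ r) D) \<le> 3"
      using less.IH by blast
    have "chi ((line_digraph_nat ^^ Suc r) D) \<le> 3" if "is_digraph D" "chi D \<le> K" for D
    proof -
      have "chi (line_digraph_nat D) \<le> K'"
        using K' that chi_line_digraph_nat[OF that(1)] by metis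
      then show ?thesis
        using r that is_digraph_line_digraph_nat unfolding funpow_Suc_right comp_apply by blast
    qed
    then show ?thesis
      by blast
  qed
qed

lemma line_digraph_nat_iter_chi_large:
  "\<exists>N. \<forall>D. is_digraph D \<longrightarrow> N \<le> chi D \<longrightarrow> n \<le> chi ((line_digraph_nat ^^ r) D)"
proof (induction r arbitrary: n)
  case 0
  then show ?case
    by auto
next
  case (Suc r)
  then obtain N where N: "\<forall>D. is_digraph D \<longrightarrow> N \<le> chi D \<longrightarrow> n \<le> chi ((line_digraph_nat ^^ r) D)"
    by blast
  have "n \<le> chi ((line_digraph_nat ^^ Suc r) D)" if D: "is_digraph D" "2 ^ N \<le> chi D" for D
  proof -
    have "(2::nat) ^ N \<le> 2 ^ chi (line_digraph_nat D)"
      using D chi_le_exp_chi_line_digraph chi_line_digraph_nat by (metis le_trans)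
    then have "N \<le> chi (line_digraph_nat D)"
      by simp
    then show ?thesis
      using N D is_digraph_line_digraph_nat unfolding funpow_Suc_right comp_apply by blast
  qed
  then show ?case
    by blast
qed

lemma chi_dprod_line_digraph_nat_iter_le_3:
  assumes r: "\<forall>D. is_digraph D \<longrightarrow> chi D \<le> K \<longrightarrow> chi ((line_digraph_nat ^^ r) D) \<le> 3"
    and XY: "is_digraph X" "is_digraph Y" "chi (dprod X Y) \<le> K"
  shows "chi (dprod ((line_digraph_nat ^^ r) X) ((line_digraph_nat ^^ r) Y)) \<le> 3"
proof -
  let ?P = "dmap prod_encode (dprod X Y)"
  have P: "is_digraph ?P"
    using XY by (simp add: is_digraph_dmap is_digraph_dprod inj_prod_encode)
  have "chi ?P \<le> K"
    using XY by (simp add: chi_dmap is_digraph_dprod inj_prod_encode)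
  then have "chi ((line_digraph_nat ^^ r) ?P) \<le> 3"
    using r P by blast
  moreover have "chi (dprod ((line_digraph_nat ^^ r) X) ((line_digraph_nat ^^ r) Y))
      \<le> chi ((line_digraph_nat ^^ r) ?P)"
    using P by (intro chi_le_if_homomorphic homomorphic_dprod_line_digraph_nat_iter
        is_digraph_line_digraph_nat_iter)
  ultimately show ?thesis
    by linarith
qed

section \<open>The functions \<open>f\<close>, \<open>g\<close> and \<open>h\<close>\<close>

definition complete_digraph :: "nat \<Rightarrow> nat digraph" where
  "complete_digraph n = ({..<n}, {(a,b). a < n \<and> b < n \<and> a \<noteq> b})"

lemma is_graph_complete_digraph: "is_graph (complete_digraph n)"
  unfolding is_graph_def is_digraph_def complete_digraph_def irrefl_def sym_def by auto

lemma is_digraph_complete_digraph: "is_digraph (complete_digraph n)"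
  using is_graph_complete_digraph unfolding is_graph_def by blast

lemma chi_complete_digraph: "n \<le> chi (complete_digraph n)"
proof -
  obtain c where c: "proper_colouring (complete_digraph n) (chi (complete_digraph n)) c"
    using is_digraph_complete_digraph by (rule proper_colouring_chi)
  have "inj_on c {..<n}"
  proof (rule inj_onI, rule ccontr)
    fix a b assume "a \<in> {..<n}" "b \<in> {..<n}" "c a = c b" "a \<noteq> b"
    then show False
      using c unfolding proper_colouring_def complete_digraph_def by auto
  qed
  moreover have "c ` {..<n} \<subseteq> {..<chi (complete_digraph n)}"
    using c unfolding proper_colouring_def complete_digraph_def by auto
  ultimately have "card {..<n} \<le> card {..<chi (complete_digraph n)}"
    by (intro card_inj_on_le) auto
  then show ?thesis
    by simp
qed

lemma g_fun_attained:
  "\<exists>(D1 :: nat digraph) (D2 :: nat digraph). is_digraph D1 \<and> is_digraph D2 \<and> n \<le> chi D1 \<and> n \<le> chi D2 \<and>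
     chi (dprod D1 D2) = g_fun n"
proof -
  let ?K = "complete_digraph n"
  have "\<exists>k (D1 :: nat digraph) (D2 :: nat digraph). is_digraph D1 \<and> is_digraph D2 \<and> n \<le> chi D1 \<and> n \<le> chi D2 \<and>
      chi (dprod D1 D2) = k"
    by (rule exI, rule exI[where x = ?K], rule exI[where x = ?K])
      (simp add: is_digraph_complete_digraph chi_complete_digraph)
  then show ?thesis
    unfolding g_fun_def by (rule LeastI_ex)
qed

lemma g_fun_le:
  "is_digraph D1 \<Longrightarrow> is_digraph D2 \<Longrightarrow> n \<le> chi D1 \<Longrightarrow> n \<le> chi D2 \<Longrightarrow>
     g_fun n \<le> chi (dprod (D1 :: nat digraph) (D2 :: nat digraph))"
  unfolding g_fun_def by (rule Least_le, intro exI[of _ D1] exI[of _ D2]) simp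

lemma h_fun_attained:
  "\<exists>(D1 :: nat digraph) (D2 :: nat digraph). is_digraph D1 \<and> is_digraph D2 \<and> n \<le> chi D1 \<and> n \<le> chi D2 \<and>
     max (chi (dprod D1 D2)) (chi (dprod D1 (drev D2))) = h_fun n"
proof -
  let ?K = "complete_digraph n"
  have "\<exists>k (D1 :: nat digraph) (D2 :: nat digraph). is_digraph D1 \<and> is_digraph D2 \<and> n \<le> chi D1 \<and> n \<le> chi D2 \<and>
      max (chi (dprod D1 D2)) (chi (dprod D1 (drev D2))) = k"
    by (rule exI, rule exI[where x = ?K], rule exI[where x = ?K])
      (simp add: is_digraph_complete_digraph chi_complete_digraph)
  then show ?thesis
    unfolding h_fun_def by (rule LeastI_ex)
qed

lemma h_fun_le:
  "is_digraph D1 \<Longrightarrow> is_digraph D2 \<Longrightarrow> n \<le> chi D1 \<Longrightarrow> n \<le> chi D2 \<Longrightarrow>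
     h_fun n \<le> max (chi (dprod (D1 :: nat digraph) (D2 :: nat digraph))) (chi (dprod D1 (drev D2)))"
  unfolding h_fun_def by (rule Least_le, intro exI[of _ D1] exI[of _ D2]) simp

lemma f_fun_attained:
  "\<exists>(G :: nat digraph) (H :: nat digraph). is_graph G \<and> is_graph H \<and> n \<le> chi G \<and> n \<le> chi H \<and>
     chi (dprod G H) = f_fun n"
proof -
  let ?K = "complete_digraph n"
  have "\<exists>k (G :: nat digraph) (H :: nat digraph). is_graph G \<and> is_graph H \<and> n \<le> chi G \<and> n \<le> chi H \<and>
      chi (dprod G H) = k"
    by (rule exI, rule exI[where x = ?K], rule exI[where x = ?K])
      (simp add: is_graph_complete_digraph chi_complete_digraph)
  then show ?thesis
    unfolding f_fun_def by (rule LeastI_ex)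
qed

lemma f_fun_le:
  "is_graph G \<Longrightarrow> is_graph H \<Longrightarrow> n \<le> chi G \<Longrightarrow> n \<le> chi H \<Longrightarrow>
     f_fun n \<le> chi (dprod (G :: nat digraph) (H :: nat digraph))"
  unfolding f_fun_def by (rule Least_le, intro exI[of _ G] exI[of _ H]) simp

lemma frequently_le_if_not_tendsto_at_top:
  fixes u :: "'a \<Rightarrow> 'b :: linorder"
  assumes "\<not> filterlim u at_top F"
  shows "\<exists>K. \<exists>\<^sub>F x in F. u x \<le> K"
proof -
  obtain K where "\<exists>\<^sub>F x in F. \<not> K \<le> u x"
    using assms unfolding filterlim_at_top not_all not_eventually by blast
  then have "\<exists>\<^sub>F x in F. u x \<le> K"
    by (rule frequently_elim1) simp
  then show ?thesis
    by blast
qed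

lemma g_fun_le_3_if_frequently_bounded:
  assumes "\<exists>\<^sub>F n in sequentially. g_fun n \<le> K"
  shows "g_fun n \<le> 3"
proof -
  obtain r where r: "\<forall>D. is_digraph D \<longrightarrow> chi D \<le> K \<longrightarrow> chi ((line_digraph_nat ^^ r) D) \<le> 3"
    using line_digraph_nat_iter_3_colourable by blast
  obtain N where N: "\<forall>D. is_digraph D \<longrightarrow> N \<le> chi D \<longrightarrow> n \<le> chi ((line_digraph_nat ^^ r) D)"
    using line_digraph_nat_iter_chi_large by blast
  obtain N' where "N \<le> N'" "g_fun N' \<le> K"
    using assms unfolding frequently_sequentially by blast
  moreover obtain D1 D2 :: "nat digraph" where D: "is_digraph D1" "is_digraph D2"
    "N' \<le> chi D1" "N' \<le> chi D2" "chi (dprod D1 D2) = g_fun N'"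
    using g_fun_attained by blast
  ultimately have large: "n \<le> chi ((line_digraph_nat ^^ r) D1)" "n \<le> chi ((line_digraph_nat ^^ r) D2)"
    and "chi (dprod D1 D2) \<le> K"
    using N by (meson order_trans, meson order_trans, simp)
  let ?L = "line_digraph_nat ^^ r"
  have "chi (dprod (?L D1) (?L D2)) \<le> 3"
    using chi_dprod_line_digraph_nat_iter_le_3[OF r D(1,2)] \<open>chi (dprod D1 D2) \<le> K\<close> .
  moreover have "g_fun n \<le> chi (dprod (?L D1) (?L D2))"
    using large D(1,2) by (intro g_fun_le is_digraph_line_digraph_nat_iter)
  ultimately show ?thesis
    by linarith
qed

lemma h_fun_le_3_if_frequently_bounded:
  assumes "\<exists>\<^sub>F n in sequentially. h_fun n \<le> K"
  shows "h_fun n \<le> 3"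
proof -
  obtain r where r: "\<forall>D. is_digraph D \<longrightarrow> chi D \<le> K \<longrightarrow> chi ((line_digraph_nat ^^ r) D) \<le> 3"
    using line_digraph_nat_iter_3_colourable by blast
  obtain N where N: "\<forall>D. is_digraph D \<longrightarrow> N \<le> chi D \<longrightarrow> n \<le> chi ((line_digraph_nat ^^ r) D)"
    using line_digraph_nat_iter_chi_large by blast
  obtain N' where "N \<le> N'" "h_fun N' \<le> K"
    using assms unfolding frequently_sequentially by blast
  moreover obtain D1 D2 :: "nat digraph" where D: "is_digraph D1" "is_digraph D2"
    "N' \<le> chi D1" "N' \<le> chi D2" "max (chi (dprod D1 D2)) (chi (dprod D1 (drev D2))) = h_fun N'"
    using h_fun_attained by blast
  ultimately have large: "n \<le> chi ((line_digraph_nat ^^ r) D1)" "n \<le> chi ((line_digraph_nat ^^ r) D2)"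
    and "chi (dprod D1 D2) \<le> K" "chi (dprod D1 (drev D2)) \<le> K"
    using N by (meson order_trans, meson order_trans, simp_all)
  let ?L = "line_digraph_nat ^^ r"
  have "chi (dprod (?L D1) (?L D2)) \<le> 3"
    using chi_dprod_line_digraph_nat_iter_le_3[OF r D(1,2)] \<open>chi (dprod D1 D2) \<le> K\<close> .
  moreover have "chi (dprod (?L D1) (drev (?L D2))) \<le> chi (dprod (?L D1) (?L (drev D2)))"
    using D by (intro chi_le_if_homomorphic homomorphic_dprod homomorphic_refl
        homomorphic_drev_line_digraph_nat_iter is_digraph_dprod is_digraph_line_digraph_nat_iter
        is_digraph_drev)
  moreover have "chi (dprod (?L D1) (?L (drev D2))) \<le> 3"
    using chi_dprod_line_digraph_nat_iter_le_3[OF r D(1) is_digraph_drev[OF D(2)]]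
      \<open>chi (dprod D1 (drev D2)) \<le> K\<close> .
  moreover have "h_fun n \<le> max (chi (dprod (?L D1) (?L D2))) (chi (dprod (?L D1) (drev (?L D2))))"
    using large D(1,2) by (intro h_fun_le is_digraph_line_digraph_nat_iter)
  ultimately show ?thesis
    by linarith
qed

lemma h_fun_le_f_fun: "h_fun n \<le> f_fun n"
proof -
  obtain G H :: "nat digraph" where GH: "is_graph G" "is_graph H" "n \<le> chi G" "n \<le> chi H"
    "chi (dprod G H) = f_fun n"
    using f_fun_attained by blast
  have "drev H = H"
    using GH(2) unfolding is_graph_def drev_def by (simp add: sym_conv_converse_eq)
  then show ?thesis
    using h_fun_le[of G H n] GH unfolding is_graph_def by simp
qed

definition underlying_graph :: "'a digraph \<Rightarrow> 'a digraph" where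
  "underlying_graph D = (fst D, snd D \<union> (snd D)\<inverse>)"

lemma is_graph_underlying_graph: "is_digraph D \<Longrightarrow> is_graph (underlying_graph D)"
  unfolding is_graph_def is_digraph_def underlying_graph_def irrefl_def sym_def by auto

lemma chi_le_chi_underlying_graph: "is_digraph D \<Longrightarrow> chi D \<le> chi (underlying_graph D)"
  using is_graph_underlying_graph[of D] unfolding is_graph_def
  by (intro chi_le_if_homomorphic) (auto simp: homomorphic_def hom_def underlying_graph_def)

text \<open>An arc of the product of the underlying graphs is, up to orientation, an arc of
  \<open>D\<^sub>1 \<times> D\<^sub>2\<close> or of \<open>D\<^sub>1 \<times> D\<^sub>2\<^sup>-\<^sup>1\<close>, so the pair of colours from these two products is proper.\<close>

lemma chi_dprod_underlying_graph_le:
  assumes "is_digraph D1" "is_digraph D2"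
  shows "chi (dprod (underlying_graph D1) (underlying_graph D2))
    \<le> chi (dprod D1 D2) * chi (dprod D1 (drev D2))"
proof -
  define a where "a = chi (dprod D1 D2)"
  define b where "b = chi (dprod D1 (drev D2))"
  obtain c1 where c1: "proper_colouring (dprod D1 D2) a c1"
    using proper_colouring_chi[OF is_digraph_dprod[OF assms]] a_def by blast
  obtain c2 where c2: "proper_colouring (dprod D1 (drev D2)) b c2"
    using proper_colouring_chi[OF is_digraph_dprod[OF assms(1) is_digraph_drev[OF assms(2)]]] b_def
    by blast
  let ?U = "dprod (underlying_graph D1) (underlying_graph D2)"
  have "chi ?U \<le> card ({..<a} \<times> {..<b})"
  proof (rule chi_le_card[where c = "\<lambda>p. (c1 p, c2 p)"])
    show "is_digraph ?U"
      using assms by (intro is_digraph_dprod) (auto simp: is_graph_underlying_graph[unfolded is_graph_def])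
    show "\<forall>p\<in>fst ?U. (c1 p, c2 p) \<in> {..<a} \<times> {..<b}"
      using c1 c2 unfolding proper_colouring_def dprod_def drev_def underlying_graph_def by auto
    have "c1 (x,y) \<noteq> c1 (x',y') \<or> c2 (x,y) \<noteq> c2 (x',y')"
      if "(x,x') \<in> snd D1 \<or> (x',x) \<in> snd D1" "(y,y') \<in> snd D2 \<or> (y',y) \<in> snd D2" for x y x' y'
      using that c1 c2 unfolding proper_colouring_def dprod_def drev_def by fastforce
    then show "\<forall>(p, q)\<in>snd ?U. (c1 p, c2 p) \<noteq> (c1 q, c2 q)"
      unfolding dprod_def underlying_graph_def by auto
  qed simp
  then show ?thesis
    by (simp add: a_def b_def)
qed

lemma f_fun_le_9_if_h_fun_le_3:
  assumes "h_fun n \<le> 3"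
  shows "f_fun n \<le> 9"
proof -
  obtain D1 D2 :: "nat digraph" where D: "is_digraph D1" "is_digraph D2" "n \<le> chi D1" "n \<le> chi D2"
    "max (chi (dprod D1 D2)) (chi (dprod D1 (drev D2))) = h_fun n"
    using h_fun_attained by blast
  have "f_fun n \<le> chi (dprod (underlying_graph D1) (underlying_graph D2))"
    using D(3,4) chi_le_chi_underlying_graph[OF D(1)] chi_le_chi_underlying_graph[OF D(2)]
    by (intro f_fun_le is_graph_underlying_graph D(1,2)) linarith+
  also have "\<dots> \<le> chi (dprod D1 D2) * chi (dprod D1 (drev D2))"
    using D by (intro chi_dprod_underlying_graph_le)
  also have "\<dots> \<le> 3 * 3"
    using D assms by (intro mult_le_mono) auto
  finally show ?thesis
    by simp
qed

theorem mainTheorem13: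
  shows "((\<forall>n. g_fun n \<le> 3) \<or> filterlim g_fun at_top sequentially) \<and>
         ((\<forall>n. h_fun n \<le> 3) \<or> filterlim h_fun at_top sequentially) \<and>
         ((\<forall>n. f_fun n \<le> 9) \<or> filterlim f_fun at_top sequentially)"
proof -
  have g: "(\<forall>n. g_fun n \<le> 3) \<or> filterlim g_fun at_top sequentially"
    using frequently_le_if_not_tendsto_at_top g_fun_le_3_if_frequently_bounded by blast
  have h: "(\<forall>n. h_fun n \<le> 3) \<or> filterlim h_fun at_top sequentially"
    using frequently_le_if_not_tendsto_at_top h_fun_le_3_if_frequently_bounded by blast
  moreover have "filterlim f_fun at_top sequentially" if "filterlim h_fun at_top sequentially"
    using that by (rule filterlim_at_top_mono) (simp add: h_fun_le_f_fun)
  ultimately have f: "(\<forall>n. f_fun n \<le> 9) \<or> filterlim f_fun at_top sequentially"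
    using f_fun_le_9_if_h_fun_le_3 by blast
  show ?thesis
    using g h f by blast
qed

end
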